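(* Let $Q=\langle b\rangle\ltimes_{(g,\gamma)}X$. Then the congruence of $Q$ induced by the abelian normal subgroup $1\times X$ is abelian if and only if $Q$ is a group.
   Context: Let $(X,+)$ be an abelian group and $(g,\gamma)$ a construction pair on it: $g$ a permutation of $X$, $\gamma:X\times X\to X$ symmetric, alternating, biadditive, with (C1) $g^{-1}(g(x)+g(y))=x+y+\gamma(x,y)+g^{-1}(\gamma(x,y))+g^{-2}(\gamma(x,y))$, (C2) $\gamma(\gamma(x,y),z)=0$, (C3) $g^{-1}(\gamma(x,y))=\gamma(g(x),y)$ for all $x,y,z$. Let $\mathrm{Rad}(\gamma)=\{x:\gamma(x,y)=0\ \forall y\}$ and $r(g,\gamma)$ the least positive $r$ with $\sum_{0\le k<r}g^k(x)\in\mathrm{Rad}(\gamma)$ for all $x$ ($\infty$ if none). $I(i,j)$ is $\emptyset$ if $i=j$, $\{i,\dots,j-1\}$ if $i<j$, $\{j,\dots,i-1\}$ if $j<i$. For a cyclic group $C=\langle b\rangle$ such that (if finite) $|g|$ and $r(g,\gamma)$ divide $|C|$, $C\ltimes_{(g,\gamma)}X$ is the Moufang loop on $C\times X$ with multiplication $(b^i,x)(b^j,y)=(b^{i+j},g^{-j}(x)+y+\sum_{k\in I(i+j,-j)}g^{-k}(\gamma(x,y)))$, neutral element $(1,0)$. In a loop $Q$ let $L_x(y)=xy$, $R_x(y)=yx$, $T_x=R_x^{-1}L_x$, $L_{x,y}=L_{xy}^{-1}L_xL_y$, $R_{x,y}=R_{xy}^{-1}R_yR_x$. A normal subloop $N$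 induces the congruence $\rho_N=\{(u,v):uN=vN\}$. For congruences $\rho,\sigma$ of $Q$, the commutator $[\rho,\sigma]_Q$ is the congruence generated by all pairs $(T_{b_1}(a),T_{c_1}(a))$, $(L_{b_1,b_2}(a),L_{c_1,c_2}(a))$, $(R_{b_1,b_2}(a),R_{c_1,c_2}(a))$ with $1\,\rho\, a$, $b_1\,\sigma\, c_1$, $b_2\,\sigma\,c_2$. A congruence $\rho$ is abelian if $[\rho,\rho]_Q$ is the identity relation. *)

theory Defs
  imports Main
begin

definition gpow :: "('a \<Rightarrow> 'a) \<Rightarrow> int \<Rightarrow> 'a \<Rightarrow> 'a" where
  "gpow g k = (if 0 \<le> k then g ^^ nat k else (inv g) ^^ nat (- k))"

definition construction_pair :: "('a::ab_group_add \<Rightarrow> 'a) \<Rightarrow> ('a \<Rightarrow> 'a \<Rightarrow> 'a) \<Rightarrow> bool" where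
  "construction_pair g \<gamma> \<longleftrightarrow>
     bij g
   \<and> (\<forall>x y. \<gamma> x y = \<gamma> y x)
   \<and> (\<forall>x. \<gamma> x x = 0)
   \<and> (\<forall>x y z. \<gamma> (x + y) z = \<gamma> x z + \<gamma> y z)
   \<and> (\<forall>x y z. \<gamma> x (y + z) = \<gamma> x y + \<gamma> x z)
   \<and> (\<forall>x y. inv g (g x + g y) =
          x + y + \<gamma> x y + inv g (\<gamma> x y) + inv g (inv g (\<gamma> x y)))
   \<and> (\<forall>x y z. \<gamma> (\<gamma> x y) z = 0)
   \<and> (\<forall>x y. inv g (\<gamma> x y) = \<gamma> (g x) y)"

definition Rad :: "('a::zero \<Rightarrow> 'a \<Rightarrow> 'a) \<Rightarrow> 'a set" where
  "Rad \<gamma> = {x. \<forall>y. \<gamma> x y = 0}"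

text \<open>r(g,gamma); the value 0 encodes infinity.\<close>
definition rgam :: "('a::comm_monoid_add \<Rightarrow> 'a) \<Rightarrow> ('a \<Rightarrow> 'a \<Rightarrow> 'a) \<Rightarrow> nat" where
  "rgam g \<gamma> = (if \<exists>r>0. \<forall>x. (\<Sum>k<r. (g ^^ k) x) \<in> Rad \<gamma>
                then LEAST r. r > 0 \<and> (\<forall>x. (\<Sum>k<r. (g ^^ k) x) \<in> Rad \<gamma>)
                else 0)"

text \<open>Order of a permutation; the value 0 encodes infinite order.\<close>
definition perm_order :: "('a \<Rightarrow> 'a) \<Rightarrow> nat" where
  "perm_order g = (if \<exists>k>0. g ^^ k = id then LEAST k. k > 0 \<and> g ^^ k = id else 0)"

definition Iset :: "int \<Rightarrow> int \<Rightarrow> int set" where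
  "Iset i j = (if i = j then {} else if i < j then {i..j - 1} else {j..i - 1})"

text \<open>C = <b> cyclic of order n, where n = 0 means C is infinite cyclic.
  An element (b^i, x) is represented as (i, x) with i the canonical
  representative: i \<in> {0..<n} if n > 0, i \<in> \<int> if n = 0.\<close>
definition sdp_carrier :: "nat \<Rightarrow> (int \<times> 'a) set" where
  "sdp_carrier n = {(i, x). n = 0 \<or> (0 \<le> i \<and> i < int n)}"

definition sdp_mult :: "nat \<Rightarrow> ('a::ab_group_add \<Rightarrow> 'a) \<Rightarrow> ('a \<Rightarrow> 'a \<Rightarrow> 'a)
    \<Rightarrow> int \<times> 'a \<Rightarrow> int \<times> 'a \<Rightarrow> int \<times> 'a" where
  "sdp_mult n g \<gamma> u v = (case u of (i, x) \<Rightarrow> case v of (j, y) \<Rightarrow>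
     ((i + j) mod int n,
      gpow g (- j) x + y + (\<Sum>k\<in>Iset (i + j) (- j). gpow g (- k) (\<gamma> x y))))"

definition Lmap :: "('e \<Rightarrow> 'e \<Rightarrow> 'e) \<Rightarrow> 'e \<Rightarrow> 'e \<Rightarrow> 'e" where
  "Lmap m a = (\<lambda>y. m a y)"

definition Rmap :: "('e \<Rightarrow> 'e \<Rightarrow> 'e) \<Rightarrow> 'e \<Rightarrow> 'e \<Rightarrow> 'e" where
  "Rmap m a = (\<lambda>y. m y a)"

definition Linv :: "'e set \<Rightarrow> ('e \<Rightarrow> 'e \<Rightarrow> 'e) \<Rightarrow> 'e \<Rightarrow> 'e \<Rightarrow> 'e" where
  "Linv S m a = inv_into S (Lmap m a)"

definition Rinv :: "'e set \<Rightarrow> ('e \<Rightarrow> 'e \<Rightarrow> 'e) \<Rightarrow> 'e \<Rightarrow> 'e \<Rightarrow> 'e" where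
  "Rinv S m a = inv_into S (Rmap m a)"

definition Tmap :: "'e set \<Rightarrow> ('e \<Rightarrow> 'e \<Rightarrow> 'e) \<Rightarrow> 'e \<Rightarrow> 'e \<Rightarrow> 'e" where
  "Tmap S m x = Rinv S m x \<circ> Lmap m x"

definition L2map :: "'e set \<Rightarrow> ('e \<Rightarrow> 'e \<Rightarrow> 'e) \<Rightarrow> 'e \<Rightarrow> 'e \<Rightarrow> 'e \<Rightarrow> 'e" where
  "L2map S m x y = Linv S m (m x y) \<circ> Lmap m x \<circ> Lmap m y"

definition R2map :: "'e set \<Rightarrow> ('e \<Rightarrow> 'e \<Rightarrow> 'e) \<Rightarrow> 'e \<Rightarrow> 'e \<Rightarrow> 'e \<Rightarrow> 'e" where
  "R2map S m x y = Rinv S m (m x y) \<circ> Rmap m y \<circ> Rmap m x"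

definition loop_congruence :: "'e set \<Rightarrow> ('e \<Rightarrow> 'e \<Rightarrow> 'e) \<Rightarrow> 'e rel \<Rightarrow> bool" where
  "loop_congruence S m \<rho> \<longleftrightarrow> equiv S \<rho> \<and>
     (\<forall>a b c d. (a, b) \<in> \<rho> \<longrightarrow> (c, d) \<in> \<rho> \<longrightarrow>
        (m a c, m b d) \<in> \<rho> \<and> (Linv S m a c, Linv S m b d) \<in> \<rho> \<and>
        (Rinv S m a c, Rinv S m b d) \<in> \<rho>)"

definition Cg :: "'e set \<Rightarrow> ('e \<Rightarrow> 'e \<Rightarrow> 'e) \<Rightarrow> 'e rel \<Rightarrow> 'e rel" where
  "Cg S m P = \<Inter> {\<rho>. loop_congruence S m \<rho> \<and> P \<subseteq> \<rho>}"

definition commutator :: "'e set \<Rightarrow> ('e \<Rightarrow> 'e \<Rightarrow> 'e) \<Rightarrow> 'e \<Rightarrow> 'e rel \<Rightarrow> 'e rel \<Rightarrow> 'e rel" where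
  "commutator S m e \<rho> \<sigma> = Cg S m
     ({(Tmap S m b1 a, Tmap S m c1 a) | a b1 c1. (e, a) \<in> \<rho> \<and> (b1, c1) \<in> \<sigma>}
    \<union> {(L2map S m b1 b2 a, L2map S m c1 c2 a) | a b1 b2 c1 c2.
         (e, a) \<in> \<rho> \<and> (b1, c1) \<in> \<sigma> \<and> (b2, c2) \<in> \<sigma>}
    \<union> {(R2map S m b1 b2 a, R2map S m c1 c2 a) | a b1 b2 c1 c2.
         (e, a) \<in> \<rho> \<and> (b1, c1) \<in> \<sigma> \<and> (b2, c2) \<in> \<sigma>})"

definition abelian_congruence :: "'e set \<Rightarrow> ('e \<Rightarrow> 'e \<Rightarrow> 'e) \<Rightarrow> 'e \<Rightarrow> 'e rel \<Rightarrow> bool" where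
  "abelian_congruence S m e \<rho> \<longleftrightarrow> commutator S m e \<rho> \<rho> = Id_on S"

definition cong_of :: "'e set \<Rightarrow> ('e \<Rightarrow> 'e \<Rightarrow> 'e) \<Rightarrow> 'e set \<Rightarrow> 'e rel" where
  "cong_of S m N = {(u, v). u \<in> S \<and> v \<in> S \<and> (\<lambda>k. m u k) ` N = (\<lambda>k. m v k) ` N}"

text \<open>A loop is a group iff its multiplication is associative.\<close>
definition is_group :: "'e set \<Rightarrow> ('e \<Rightarrow> 'e \<Rightarrow> 'e) \<Rightarrow> bool" where
  "is_group S m \<longleftrightarrow> (\<forall>a\<in>S. \<forall>b\<in>S. \<forall>c\<in>S. m (m a b) c = m a (m b c))"

end

(*
  The congruence of the kernel 1 \<times> X relates exactly the elements with the same C-coordinate,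
  because the coset (b^i, x)(1 \<times> X) is {b^i} \<times> X.  If \<gamma> = 0, the multiplication is that of
  the ordinary semidirect product, a group; in a group the inner mappings L_{x,y} and R_{x,y} are
  trivial and T_{(b^j,y)} acts on the kernel as g^j, independently of y, so the commutator of the
  kernel congruence with itself is trivial.  Conversely, (b^0,v)(b,u) and (b,g^-1 v)(b^0,u) differ
  exactly by \<gamma>(v,u): associativity identifies them as the two bracketings of (b^0,v)(b,0)(b^0,u), and
  abelianness identifies them through L_{(b^0,v),(b,0)} = L_{(b^0,0),(b,g^-1 v)}, since the two pairs
  of indices are related and have the same product.  For trivial C, r(g,\<gamma>) = 1 forces \<gamma> = 0.
*)

theory Submission
  imports Defs "HOL.Modules"
begin

section \<open>Integer powers of a permutation\<close>

lemma gpow_0 [simp]: "gpow g 0 = id"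
  by (simp add: gpow_def)

lemma gpow_1 [simp]: "gpow g 1 = g"
  by (simp add: gpow_def)

lemma gpow_minus_1 [simp]: "gpow g (- 1) = inv g"
  by (simp add: gpow_def)

lemma gpow_add1:
  assumes "bij g"
  shows "gpow g (k + 1) x = g (gpow g k x)"
proof (cases "0 \<le> k")
  case True
  then show ?thesis by (simp add: gpow_def nat_add_distrib)
next
  case False
  then have "nat (- k) = Suc (nat (- (k + 1)))" by simp
  with False assms show ?thesis
    by (auto simp: gpow_def bij_is_surj surj_f_inv_f)
qed

lemma gpow_add:
  assumes "bij g"
  shows "gpow g (a + b) x = gpow g a (gpow g b x)"
proof (induction a rule: int_induct[where k = 0])
  case base
  then show ?case by simp
next
  case (step1 i)
  then show ?case using gpow_add1[OF assms, of "i + b"] gpow_add1[OF assms, of i]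
    by (simp add: ac_simps)
next
  case (step2 i)
  have "gpow g (i + b) x = g (gpow g (i - 1 + b) x)" "gpow g i y = g (gpow g (i - 1) y)" for y
    using gpow_add1[OF assms, of "i - 1 + b"] gpow_add1[OF assms, of "i - 1"] by simp_all
  with step2 show ?case
    using assms by (metis bij_is_inj inv_f_f)
qed

lemma gpow_int_mult:
  assumes "bij g" "g ^^ n = id"
  shows "gpow g (int n * t) x = x"
proof -
  have pos: "gpow g (int n) y = y" for y
    using assms(2) by (simp add: gpow_def)
  moreover have "gpow g (- int n) y = y" for y
    using gpow_add[OF assms(1), of "- int n" "int n" y] pos by simp
  ultimately show ?thesis
  proof (induction t rule: int_induct[where k = 0])
    case (step1 i)
    then show ?case by (simp add: distrib_left gpow_add[OF assms(1)])
  next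
    case (step2 i)
    then show ?case
      using gpow_add[OF assms(1), of "- int n" "int n * i"] by (simp add: right_diff_distrib)
  qed simp
qed

lemma gpow_mod:
  assumes "bij g" "g ^^ n = id"
  shows "gpow g (k mod int n) x = gpow g k x"
  using gpow_add[OF assms(1), of "k mod int n" "int n * (k div int n)" x]
  by (simp add: gpow_int_mult[OF assms])

lemma gpow_minus_mod:
  assumes "bij g" "g ^^ n = id"
  shows "gpow g (- (k mod int n)) x = gpow g (- k) x"
  by (metis gpow_mod[OF assms] mod_minus_eq)

lemma additive_inv:
  assumes "additive f" "bij f"
  shows "additive (inv f)"
proof
  fix x y
  have "f (inv f x + inv f y) = x + y"
    using assms by (simp add: additive.add bij_is_surj surj_f_inv_f)
  then show "inv f (x + y) = inv f x + inv f y"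
    using assms(2) by (metis bij_is_inj inv_f_f)
qed

lemma additive_funpow:
  fixes f :: "'a::ab_group_add \<Rightarrow> 'a"
  assumes "additive f"
  shows "additive (f ^^ m)"
proof (induction m)
  case (Suc m)
  then show ?case
    using additive.add[OF assms] by (simp add: additive_def)
qed (simp add: additive_def)

lemma additive_gpow:
  assumes "additive g" "bij g"
  shows "additive (gpow g k)"
  using additive_funpow[OF assms(1)] additive_funpow[OF additive_inv[OF assms]]
  by (simp add: gpow_def)

section \<open>Groups as loops\<close>

definition group_on :: "'e set \<Rightarrow> ('e \<Rightarrow> 'e \<Rightarrow> 'e) \<Rightarrow> 'e \<Rightarrow> bool" where
  "group_on S m e \<longleftrightarrow> is_group S m \<and> (\<forall>a\<in>S. \<forall>b\<in>S. m a b \<in> S) \<and> e \<in> S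
     \<and> (\<forall>a\<in>S. m e a = a \<and> m a e = a) \<and> (\<forall>a\<in>S. \<exists>a'\<in>S. m a' a = e \<and> m a a' = e)"

lemma group_on_bij_betw_left:
  assumes "group_on S m e" "a \<in> S"
  shows "bij_betw (m a) S S"
proof -
  obtain a' where "a' \<in> S" "m a' a = e" "m a a' = e"
    using assms unfolding group_on_def by blast
  moreover have "m a' (m a x) = x" "m a (m a' x) = x" if "x \<in> S" for x
    using assms that \<open>a' \<in> S\<close> \<open>m a' a = e\<close> \<open>m a a' = e\<close>
    unfolding group_on_def is_group_def by metis+
  ultimately show ?thesis
    using assms unfolding group_on_def
    by (intro bij_betw_byWitness[where f' = "m a'"]) auto
qed

lemma group_on_bij_betw_right:
  assumes "group_on S m e" "a \<in> S"
  shows "bij_betw (\<lambda>z. m z a) S S"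
proof -
  obtain a' where "a' \<in> S" "m a' a = e" "m a a' = e"
    using assms unfolding group_on_def by blast
  moreover have "m (m x a) a' = x" "m (m x a') a = x" if "x \<in> S" for x
    using assms that \<open>a' \<in> S\<close> \<open>m a' a = e\<close> \<open>m a a' = e\<close>
    unfolding group_on_def is_group_def by metis+
  ultimately show ?thesis
    using assms unfolding group_on_def
    by (intro bij_betw_byWitness[where f' = "\<lambda>z. m z a'"]) auto
qed

lemma group_on_loop_congruence_Id_on:
  assumes "group_on S m e"
  shows "loop_congruence S m (Id_on S)"
  unfolding loop_congruence_def
proof (intro conjI allI impI)
  show "equiv S (Id_on S)"
    by (auto simp: equiv_def refl_on_def sym_def trans_def)
  fix a b c d
  assume "(a, b) \<in> Id_on S" "(c, d) \<in> Id_on S"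
  then have "a = b" "c = d" "a \<in> S" "c \<in> S" by auto
  with assms show "(m a c, m b d) \<in> Id_on S"
    by (auto simp: group_on_def)
  have "Linv S m a c \<in> S" "Rinv S m a c \<in> S"
    using group_on_bij_betw_left[OF assms] group_on_bij_betw_right[OF assms] \<open>a \<in> S\<close> \<open>c \<in> S\<close>
    by (auto simp: Linv_def Lmap_def Rinv_def Rmap_def bij_betw_def intro!: inv_into_into)
  with \<open>a = b\<close> \<open>c = d\<close> show "(Linv S m a c, Linv S m b d) \<in> Id_on S"
    "(Rinv S m a c, Rinv S m b d) \<in> Id_on S" by auto
qed

lemma group_on_L2map:
  assumes "group_on S m e" "a \<in> S" "b1 \<in> S" "b2 \<in> S"
  shows "L2map S m b1 b2 a = a"
proof -
  have "m b1 b2 \<in> S" "m b1 (m b2 a) = m (m b1 b2) a"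
    using assms by (auto simp: group_on_def is_group_def)
  then show ?thesis
    using group_on_bij_betw_left[OF assms(1)] \<open>a \<in> S\<close>
    by (simp add: L2map_def Linv_def Lmap_def bij_betw_def inv_into_f_f)
qed

lemma group_on_R2map:
  assumes "group_on S m e" "a \<in> S" "b1 \<in> S" "b2 \<in> S"
  shows "R2map S m b1 b2 a = a"
proof -
  have "m b1 b2 \<in> S" "m (m a b1) b2 = m a (m b1 b2)"
    using assms by (auto simp: group_on_def is_group_def)
  then show ?thesis
    using group_on_bij_betw_right[OF assms(1)] \<open>a \<in> S\<close>
      inv_into_f_f[of "\<lambda>z. m z (m b1 b2)" S a]
    by (simp add: R2map_def Rinv_def Rmap_def bij_betw_def)
qed

lemma group_on_Tmap_eqI:
  assumes "group_on S m e" "b \<in> S" "c \<in> S" "m b a = m c b"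
  shows "Tmap S m b a = c"
  using group_on_bij_betw_right[OF assms(1,2)] assms(3,4) inv_into_f_f[of "\<lambda>z. m z b" S c]
  by (simp add: Tmap_def Rinv_def Lmap_def Rmap_def bij_betw_def)

lemma Cg_eq_Id_onI:
  assumes "loop_congruence S m (Id_on S)" "P \<subseteq> Id_on S"
  shows "Cg S m P = Id_on S"
proof
  show "Cg S m P \<subseteq> Id_on S"
    unfolding Cg_def using assms by (intro Inter_lower) simp
  show "Id_on S \<subseteq> Cg S m P"
    unfolding Cg_def loop_congruence_def equiv_def refl_on_def by blast
qed

lemma group_on_commutator_eq_Id_onI:
  assumes "group_on S m e" "\<rho> \<subseteq> S \<times> S" "\<sigma> \<subseteq> S \<times> S"
    and "\<And>a b c. (e, a) \<in> \<rho> \<Longrightarrow> (b, c) \<in> \<sigma> \<Longrightarrow> Tmap S m b a = Tmap S m c a"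
  shows "commutator S m e \<rho> \<sigma> = Id_on S"
proof -
  let ?P = "{(Tmap S m b1 a, Tmap S m c1 a) | a b1 c1. (e, a) \<in> \<rho> \<and> (b1, c1) \<in> \<sigma>}
    \<union> {(L2map S m b1 b2 a, L2map S m c1 c2 a) | a b1 b2 c1 c2.
         (e, a) \<in> \<rho> \<and> (b1, c1) \<in> \<sigma> \<and> (b2, c2) \<in> \<sigma>}
    \<union> {(R2map S m b1 b2 a, R2map S m c1 c2 a) | a b1 b2 c1 c2.
         (e, a) \<in> \<rho> \<and> (b1, c1) \<in> \<sigma> \<and> (b2, c2) \<in> \<sigma>}"
  have T: "(Tmap S m b a, Tmap S m c a) \<in> Id_on S" if "(e, a) \<in> \<rho>" "(b, c) \<in> \<sigma>" for a b c
  proof -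
    have "b \<in> S" "m b a \<in> S"
      using that assms(1-3) by (auto simp: group_on_def)
    then have "Tmap S m b a \<in> S"
      using group_on_bij_betw_right[OF assms(1)]
      by (auto simp: Tmap_def Rinv_def Lmap_def Rmap_def bij_betw_def intro!: inv_into_into)
    then show ?thesis using assms(4)[OF that] by (simp add: Id_on_iff)
  qed
  have L: "(L2map S m b1 b2 a, L2map S m c1 c2 a) \<in> Id_on S"
    and R: "(R2map S m b1 b2 a, R2map S m c1 c2 a) \<in> Id_on S"
    if "(e, a) \<in> \<rho>" "(b1, c1) \<in> \<sigma>" "(b2, c2) \<in> \<sigma>" for a b1 b2 c1 c2
  proof -
    have "a \<in> S" "b1 \<in> S" "b2 \<in> S" "c1 \<in> S" "c2 \<in> S"
      using that assms(2,3) by auto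
    then show "(L2map S m b1 b2 a, L2map S m c1 c2 a) \<in> Id_on S"
      "(R2map S m b1 b2 a, R2map S m c1 c2 a) \<in> Id_on S"
      using assms(1) by (simp_all add: group_on_L2map group_on_R2map Id_on_iff)
  qed
  have "?P \<subseteq> Id_on S"
    by (auto intro: T L R)
  then show ?thesis
    unfolding commutator_def by (rule Cg_eq_Id_onI[OF group_on_loop_congruence_Id_on[OF assms(1)]])
qed

lemma L2map_pair_in_commutator:
  assumes "(e, a) \<in> \<rho>" "(b1, c1) \<in> \<sigma>" "(b2, c2) \<in> \<sigma>"
  shows "(L2map S m b1 b2 a, L2map S m c1 c2 a) \<in> commutator S m e \<rho> \<sigma>"
proof -
  have sub: "Q \<subseteq> Cg S m (A \<union> Q \<union> B)" for A Q B
    by (auto simp: Cg_def)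
  have "(L2map S m b1 b2 a, L2map S m c1 c2 a) \<in> {(L2map S m b1 b2 a, L2map S m c1 c2 a) | a b1 b2 c1 c2.
         (e, a) \<in> \<rho> \<and> (b1, c1) \<in> \<sigma> \<and> (b2, c2) \<in> \<sigma>}"
    using assms by blast
  then show ?thesis
    unfolding commutator_def by (rule subsetD[OF sub])
qed

lemma L2map_eqD:
  assumes "L2map S m b1 b2 a = L2map S m c1 c2 a" "m b1 b2 = m c1 c2"
    and "m b1 (m b2 a) \<in> m (m b1 b2) ` S" "m c1 (m c2 a) \<in> m (m b1 b2) ` S"
  shows "m b1 (m b2 a) = m c1 (m c2 a)"
proof -
  have "m (m b1 b2) (L2map S m b1 b2 a) = m b1 (m b2 a)"
    using assms(3) by (simp add: L2map_def Linv_def Lmap_def f_inv_into_f)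
  moreover have "m (m b1 b2) (L2map S m c1 c2 a) = m c1 (m c2 a)"
    using assms(2,4) by (simp add: L2map_def Linv_def Lmap_def f_inv_into_f)
  ultimately show ?thesis
    using assms(1) by simp
qed

section \<open>Construction pairs and the loop C \<ltimes> X\<close>

lemma funpow_eq_id_if_perm_order_dvd:
  assumes "perm_order g \<noteq> 0" "perm_order g dvd n"
  shows "g ^^ n = id"
proof -
  have ex: "\<exists>k>0. g ^^ k = id"
    using assms(1) unfolding perm_order_def by (auto split: if_splits)
  then have "g ^^ perm_order g = id"
    unfolding perm_order_def by (simp add: LeastI_ex[OF ex])
  then show ?thesis
    using assms(2) by (metis dvdE funpow_mult id_funpow)
qed

lemma Rad_eq_UNIV_if_rgam_eq_1:
  assumes "rgam g \<gamma> = 1"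
  shows "Rad \<gamma> = UNIV"
proof -
  have ex: "\<exists>r>0. \<forall>x. (\<Sum>k<r. (g ^^ k) x) \<in> Rad \<gamma>"
    using assms unfolding rgam_def by (auto split: if_splits)
  then have "\<forall>x. (\<Sum>k<rgam g \<gamma>. (g ^^ k) x) \<in> Rad \<gamma>"
    unfolding rgam_def by (simp add: LeastI_ex[OF ex])
  with assms show ?thesis by auto
qed

lemma sdp_carrier_iff: "(i, x) \<in> sdp_carrier n \<longleftrightarrow> i mod int n = i"
  by (auto simp: sdp_carrier_def zmod_trivial_iff)

lemma sdp_mult_in_carrier: "sdp_mult n g \<gamma> a b \<in> sdp_carrier n"
  by (auto simp: sdp_mult_def sdp_carrier_iff split: prod.splits)

context
  fixes g :: "'a::ab_group_add \<Rightarrow> 'a" and \<gamma> :: "'a \<Rightarrow> 'a \<Rightarrow> 'a"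
  assumes cp: "construction_pair g \<gamma>"
begin

lemma cp_bij: "bij g"
  using cp by (simp add: construction_pair_def)

lemma cp_additive_left: "additive (\<lambda>x. \<gamma> x y)"
  using cp by (simp add: construction_pair_def additive_def)

lemma cp_additive_right: "additive (\<gamma> x)"
  using cp by (simp add: construction_pair_def additive_def)

lemma cp_gamma_0 [simp]: "\<gamma> 0 y = 0" "\<gamma> x 0 = 0"
  using additive.zero[OF cp_additive_left] additive.zero[OF cp_additive_right] by auto

lemma cp_gamma_gamma [simp]: "\<gamma> x (\<gamma> y z) = 0"
proof -
  have "\<gamma> x (\<gamma> y z) = \<gamma> (\<gamma> y z) x" "\<gamma> (\<gamma> y z) x = 0"
    using cp unfolding construction_pair_def by blast+
  then show ?thesis by simp
qed

lemma cp_inv_gamma: "inv g (\<gamma> x y) = \<gamma> (g x) y"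
  using cp by (simp add: construction_pair_def)

lemma cp_g_gamma: "g (\<gamma> x y) = \<gamma> (inv g x) y"
  using cp_inv_gamma[of "inv g x" y] cp_bij
  by (metis bij_inv_eq_iff bij_is_surj surj_f_inv_f)

lemma cp_g_0 [simp]: "g 0 = 0"
  using cp_g_gamma[of 0 0] by simp

lemma cp_inv_g_0 [simp]: "inv g 0 = 0"
  using cp_inv_gamma[of 0 0] by simp

lemma gpow_0_right [simp]: "gpow g k 0 = 0"
proof -
  have "(f ^^ m) 0 = 0" if "f 0 = 0" for f :: "'a \<Rightarrow> 'a" and m
    using that by (induction m) auto
  then show ?thesis
    by (simp add: gpow_def)
qed

lemma gpow_gamma: "gpow g k (\<gamma> x y) = \<gamma> (gpow g (- k) x) y"
proof (induction k rule: int_induct[where k = 0])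
  case (step1 i)
  have "gpow g (- (i + 1)) x = inv g (gpow g (- i) x)"
    using gpow_add[OF cp_bij, of "- 1" "- i" x] by (simp add: algebra_simps)
  with step1 show ?case
    by (simp add: gpow_add1[OF cp_bij] cp_g_gamma)
next
  case (step2 i)
  have "gpow g (i - 1) z = inv g (gpow g i z)" "gpow g (- (i - 1)) x = g (gpow g (- i) x)" for z
    using gpow_add[OF cp_bij, of "- 1" i z] gpow_add1[OF cp_bij, of "- i" x]
    by simp_all
  with step2 show ?case
    by (simp add: cp_inv_gamma)
qed simp

lemma additive_g_if_gamma_zero:
  assumes "\<And>x y. \<gamma> x y = 0"
  shows "additive g"
proof
  fix x y
  have "inv g (g x + g y) = x + y"
    using cp assms by (simp add: construction_pair_def)
  then show "g (x + y) = g x + g y"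
    using cp_bij by (metis bij_inv_eq_iff)
qed

lemma sdp_mult_0_left:
  assumes "p \<in> sdp_carrier n"
  shows "sdp_mult n g \<gamma> (0, 0) p = p"
  using assms by (cases p) (simp add: sdp_mult_def sdp_carrier_iff)

lemma sdp_mult_0_right:
  assumes "p \<in> sdp_carrier n"
  shows "sdp_mult n g \<gamma> p (0, 0) = p"
  using assms by (cases p) (simp add: sdp_mult_def sdp_carrier_iff)

lemma sdp_mult_by_kernel:
  "sdp_mult n g \<gamma> (i, x) (0, t) = (i mod int n, x + t + \<gamma> (\<Sum>k\<in>Iset i 0. gpow g k x) t)"
proof -
  have "(\<Sum>k\<in>Iset i 0. gpow g (- k) (\<gamma> x t)) = \<gamma> (\<Sum>k\<in>Iset i 0. gpow g k x) t"
    by (simp add: gpow_gamma additive.sum[OF cp_additive_left])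
  then show ?thesis
    by (simp add: sdp_mult_def)
qed

lemma sdp_coset:
  assumes "(i, x) \<in> sdp_carrier n"
  shows "sdp_mult n g \<gamma> (i, x) ` {(0, z) | z. True} = {(i, z) | z. True}"
proof (intro equalityI subsetI)
  have i: "i mod int n = i"
    using assms by (simp add: sdp_carrier_iff)
  fix p
  show "p \<in> {(i, z) | z. True}" if "p \<in> sdp_mult n g \<gamma> (i, x) ` {(0, z) | z. True}"
    using that by (auto simp: sdp_mult_by_kernel i)
  assume "p \<in> {(i, z) | z. True}"
  then obtain z where p: "p = (i, z)" by blast
  define c where "c = (\<Sum>k\<in>Iset i 0. gpow g k x)"
  have "\<gamma> c (d - \<gamma> c d) = \<gamma> c d" for d
    by (simp add: additive.diff[OF cp_additive_right] cp_gamma_gamma)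
  then have "p = sdp_mult n g \<gamma> (i, x) (0, z - x - \<gamma> c (z - x))"
    by (simp add: p sdp_mult_by_kernel i flip: c_def)
  then show "p \<in> sdp_mult n g \<gamma> (i, x) ` {(0, z) | z. True}"
    by blast
qed

lemma cong_of_sdp_kernel:
  "cong_of (sdp_carrier n) (sdp_mult n g \<gamma>) {(0, x) | x. True}
     = {(u, v). u \<in> sdp_carrier n \<and> v \<in> sdp_carrier n \<and> fst u = fst v}"
proof -
  have coset: "sdp_mult n g \<gamma> u ` {(0, x) | x. True} = {(fst u, z) | z. True}"
    if "u \<in> sdp_carrier n" for u
    using sdp_coset[of "fst u" "snd u"] that by simp
  have same: "{(i, z) | z::'a. True} = {(j, z) | z. True} \<longleftrightarrow> i = j" for i j :: int
    by (auto simp: set_eq_iff)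
  have "(u, v) \<in> cong_of (sdp_carrier n) (sdp_mult n g \<gamma>) {(0, x) | x. True}
      \<longleftrightarrow> u \<in> sdp_carrier n \<and> v \<in> sdp_carrier n \<and> fst u = fst v" for u v
  proof (cases "u \<in> sdp_carrier n \<and> v \<in> sdp_carrier n")
    case True
    then show ?thesis
      using coset[of u] coset[of v] same by (simp add: cong_of_def)
  qed (auto simp: cong_of_def)
  then show ?thesis
    by (simp add: set_eq_iff split_paired_All)
qed

lemma sdp_mult_0_1:
  "sdp_mult n g \<gamma> (0, v) (1, u) = (1 mod int n, inv g v + u + \<gamma> (inv g v) u + \<gamma> v u)"
proof -
  have "Iset 1 (- 1) = {- 1, 0}"
    by (auto simp: Iset_def)
  then show ?thesis
    by (simp add: sdp_mult_def cp_g_gamma)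
qed

text \<open>Since (0,v)(1,0) = (1, inv g v) and (1,0)(0,u) = (1,u), the two sides are the two
  bracketings of (0,v)(1,0)(0,u).\<close>

lemma sdp_mult_0_1_eq_iff:
  "sdp_mult n g \<gamma> (0, v) (1, u) = sdp_mult n g \<gamma> (1, inv g v) (0, u) \<longleftrightarrow> \<gamma> v u = 0"
proof -
  have "Iset 1 0 = {0}"
    by (auto simp: Iset_def)
  then show ?thesis
    by (simp add: sdp_mult_0_1 sdp_mult_by_kernel)
qed

lemma sdp_gamma_zero_if_is_group:
  assumes "n \<noteq> 1" "is_group (sdp_carrier n) (sdp_mult n g \<gamma>)"
  shows "\<gamma> v u = 0"
proof -
  have one: "1 mod int n = 1"
    using assms(1) by (cases "n = 0") auto
  have "(0, v) \<in> sdp_carrier n" "(1, 0) \<in> sdp_carrier n" "(0, u) \<in> sdp_carrier n"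
    by (simp_all add: sdp_carrier_iff one)
  then have "sdp_mult n g \<gamma> (sdp_mult n g \<gamma> (0, v) (1, 0)) (0, u)
      = sdp_mult n g \<gamma> (0, v) (sdp_mult n g \<gamma> (1, 0) (0, u))"
    using assms(2) unfolding is_group_def by blast
  then have "sdp_mult n g \<gamma> (0, v) (1, u) = sdp_mult n g \<gamma> (1, inv g v) (0, u)"
    by (simp add: sdp_mult_0_1 sdp_mult_by_kernel one)
  then show ?thesis
    by (simp add: sdp_mult_0_1_eq_iff)
qed

lemma sdp_gamma_zero_if_abelian:
  assumes "n \<noteq> 1"
    and "abelian_congruence (sdp_carrier n) (sdp_mult n g \<gamma>) (0, 0)
           (cong_of (sdp_carrier n) (sdp_mult n g \<gamma>) {(0, x) | x. True})"
  shows "\<gamma> v u = 0"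
proof -
  let ?S = "sdp_carrier n" and ?m = "sdp_mult n g \<gamma>"
  let ?\<rho> = "cong_of ?S ?m {(0, x) | x. True}"
  have one: "1 mod int n = 1"
    using assms(1) by (cases "n = 0") auto
  have "((0, 0), (0, u)) \<in> ?\<rho>" "((0, v), (0, 0)) \<in> ?\<rho>" "((1, 0), (1, inv g v)) \<in> ?\<rho>"
    unfolding cong_of_sdp_kernel by (simp_all add: sdp_carrier_iff one)
  then have "(L2map ?S ?m (0, v) (1, 0) (0, u), L2map ?S ?m (0, 0) (1, inv g v) (0, u))
      \<in> commutator ?S ?m (0, 0) ?\<rho> ?\<rho>"
    by (rule L2map_pair_in_commutator)
  then have L2: "L2map ?S ?m (0, v) (1, 0) (0, u) = L2map ?S ?m (0, 0) (1, inv g v) (0, u)"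
    using assms(2) by (simp add: abelian_congruence_def Id_on_iff)
  have w: "?m (0, v) (1, 0) = (1, inv g v)" "?m (0, 0) (1, inv g v) = (1, inv g v)"
    by (simp_all add: sdp_mult_0_1 one)
  have "?m (1, inv g v) ` {(0, z) | z. True} \<subseteq> ?m (1, inv g v) ` ?S"
    by (rule image_mono) (auto simp: sdp_carrier_iff)
  then have "{(1, z) | z. True} \<subseteq> ?m (1, inv g v) ` ?S"
    using sdp_coset[of 1 "inv g v" n] by (simp add: sdp_carrier_iff one)
  then have "?m (0, v) (?m (1, 0) (0, u)) = ?m (0, 0) (?m (1, inv g v) (0, u))"
    using L2map_eqD[OF L2] w by (auto simp: sdp_mult_0_1 sdp_mult_by_kernel one)
  then have "?m (0, v) (1, u) = ?m (1, inv g v) (0, u)"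
    by (simp add: sdp_mult_by_kernel sdp_mult_0_left sdp_carrier_iff one)
  then show ?thesis
    by (simp add: sdp_mult_0_1_eq_iff)
qed

lemma sdp_mult_if_gamma_zero:
  assumes "\<And>x y. \<gamma> x y = 0"
  shows "sdp_mult n g \<gamma> (i, x) (j, y) = ((i + j) mod int n, gpow g (- j) x + y)"
  by (simp add: sdp_mult_def assms)

lemma sdp_group_on_if_gamma_zero:
  assumes "\<And>x y. \<gamma> x y = 0" "g ^^ n = id"
  shows "group_on (sdp_carrier n) (sdp_mult n g \<gamma>) (0, 0)"
proof -
  have add: "additive (gpow g k)" for k
    using additive_gpow[OF additive_g_if_gamma_zero[OF assms(1)] cp_bij] .
  note minus_mod = gpow_minus_mod[OF cp_bij assms(2)]
  have "is_group (sdp_carrier n) (sdp_mult n g \<gamma>)"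
    unfolding is_group_def
  proof (intro ballI)
    fix a b c :: "int \<times> 'a"
    obtain i x j y k w where abc: "a = (i, x)" "b = (j, y)" "c = (k, w)"
      by (cases a, cases b, cases c) simp
    have "gpow g (- k) (gpow g (- j) x) = gpow g (- ((j + k) mod int n)) x"
      by (simp add: gpow_add[OF cp_bij, symmetric] minus_mod algebra_simps)
    then show "sdp_mult n g \<gamma> (sdp_mult n g \<gamma> a b) c = sdp_mult n g \<gamma> a (sdp_mult n g \<gamma> b c)"
      by (simp add: abc sdp_mult_if_gamma_zero assms additive.add[OF add] mod_add_left_eq
          mod_add_right_eq ac_simps)
  qed
  moreover have "\<exists>a'\<in>sdp_carrier n. sdp_mult n g \<gamma> a' a = (0, 0) \<and> sdp_mult n g \<gamma> a a' = (0, 0)"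
    for a
  proof (cases a)
    case (Pair i x)
    have "gpow g (- ((- i) mod int n)) x = gpow g i x"
      by (simp add: minus_mod)
    moreover have "gpow g (- i) (- gpow g i x) = - x"
      by (simp add: additive.minus[OF add] gpow_add[OF cp_bij, symmetric])
    ultimately show ?thesis
      by (intro bexI[of _ "((- i) mod int n, - gpow g i x)"])
        (simp_all add: Pair sdp_mult_if_gamma_zero assms sdp_carrier_iff mod_add_left_eq mod_add_right_eq)
  qed
  ultimately show ?thesis
    by (auto simp: group_on_def sdp_mult_in_carrier sdp_mult_0_left sdp_mult_0_right sdp_carrier_iff)
qed

lemma sdp_abelian_if_gamma_zero:
  assumes "\<And>x y. \<gamma> x y = 0" "g ^^ n = id"
  shows "abelian_congruence (sdp_carrier n) (sdp_mult n g \<gamma>) (0, 0)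
           (cong_of (sdp_carrier n) (sdp_mult n g \<gamma>) {(0, x) | x. True})"
proof -
  note G = sdp_group_on_if_gamma_zero[OF assms]
  have T: "Tmap (sdp_carrier n) (sdp_mult n g \<gamma>) (j, y) (0, x) = (0, gpow g j x)"
    if "(j, y) \<in> sdp_carrier n" for j y x
    by (rule group_on_Tmap_eqI[OF G that])
      (simp_all add: sdp_mult_if_gamma_zero assms sdp_carrier_iff gpow_add[OF cp_bij, symmetric])
  show ?thesis
    unfolding abelian_congruence_def cong_of_sdp_kernel
    by (rule group_on_commutator_eq_Id_onI[OF G]) (auto simp: T)
qed

end

theorem mainTheorem9:
  fixes g :: "'a::ab_group_add \<Rightarrow> 'a" and \<gamma> :: "'a \<Rightarrow> 'a \<Rightarrow> 'a" and n :: nat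
  assumes "construction_pair g \<gamma>"
    and "n > 0 \<Longrightarrow> perm_order g \<noteq> 0 \<and> perm_order g dvd n \<and> rgam g \<gamma> \<noteq> 0 \<and> rgam g \<gamma> dvd n"
  shows "abelian_congruence (sdp_carrier n) (sdp_mult n g \<gamma>) (0, 0)
           (cong_of (sdp_carrier n) (sdp_mult n g \<gamma>) {(0, x) | x. True})
         \<longleftrightarrow> is_group (sdp_carrier n) (sdp_mult n g \<gamma>)"
    (is "?abelian \<longleftrightarrow> ?group")
proof -
  have period: "g ^^ n = id"
    using assms(2) funpow_eq_id_if_perm_order_dvd by (cases "n = 0") auto
  \<comment> \<open>For n = 1 the witnesses (b, _) used above lie in the kernel; there r(g,\<gamma>) = 1 instead.\<close>
  have "\<gamma> x y = 0" if "n = 1" for x y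
    using assms(2) that Rad_eq_UNIV_if_rgam_eq_1[of g \<gamma>] by (auto simp: Rad_def)
  then have gamma_zero: "\<gamma> x y = 0" if "?abelian \<or> ?group" for x y
    using that sdp_gamma_zero_if_abelian[OF assms(1)] sdp_gamma_zero_if_is_group[OF assms(1)]
    by blast
  show ?thesis
  proof
    assume ?abelian
    then show ?group
      using sdp_group_on_if_gamma_zero[OF assms(1) gamma_zero period] by (simp add: group_on_def)
  next
    assume ?group
    then show ?abelian
      using sdp_abelian_if_gamma_zero[OF assms(1) gamma_zero period] by blast
  qed
qed

end
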